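(* Let $X,Y$ be real Banach spaces and let $f\in C^1(X;Y)$. Assume: (i) $f'(x)\in\mathrm{Isom}(X;Y)$ for every $x\in X$; (ii) $\sup_{\|x\|\le r}\|f'(x)^{-1}\|<+\infty$ for every $r$ with $0<r<+\infty$; (iii) there exists a locally Lipschitz continuous coercive function $k:X\to\mathbb{R}_+$ which admits all right directional derivatives $D^+_v k(x)$ ($x,v\in X$), such that $$\sup\bigl\{D^+_v k(x): v=f'(x)^{-1}u,\ x\in X,\ u\in Y,\ \|u\|=1\bigr\}<+\infty.$$ Then $f$ is a global diffeomorphism of $X$ onto $Y$. When $k\in C^1$, condition (iii) is equivalent to $\sup_{x\in X}\|k'(x)\circ f'(x)^{-1}\|<+\infty$.
   Context: $\mathrm{Isom}(X;Y)$ denotes the set of bounded linear isomorphisms from $X$ onto $Y$. $\mathbb{R}_+=[0,+\infty)$. A function $k:X\to\mathbb{R}_+$ is coercive if it is continuous and $k(x)\to+\infty$ as $\|x\|\to+\infty$. The right directional derivative is $D^+_v k(x):=\lim_{s\to0^+}\frac{k(x+sv)-k(x)}{s}$. *)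

theory Defs
  imports "HOL-Analysis.Analysis"
begin

definition is_isom :: "('a::real_normed_vector \<Rightarrow>\<^sub>L 'b::real_normed_vector) \<Rightarrow> bool" where
  "is_isom T \<longleftrightarrow> (\<exists>S. S o\<^sub>L T = id_blinfun \<and> T o\<^sub>L S = id_blinfun)"

definition inv_isom :: "('a::real_normed_vector \<Rightarrow>\<^sub>L 'b::real_normed_vector) \<Rightarrow> ('b \<Rightarrow>\<^sub>L 'a)" where
  "inv_isom T = (THE S. S o\<^sub>L T = id_blinfun \<and> T o\<^sub>L S = id_blinfun)"

definition has_right_dir_deriv :: "('a::real_normed_vector \<Rightarrow> real) \<Rightarrow> 'a \<Rightarrow> 'a \<Rightarrow> real \<Rightarrow> bool" where
  "has_right_dir_deriv k x v D \<longleftrightarrow>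
     ((\<lambda>s. (k (x + s *\<^sub>R v) - k x) / s) \<longlongrightarrow> D) (at_right 0)"

definition right_dir_deriv :: "('a::real_normed_vector \<Rightarrow> real) \<Rightarrow> 'a \<Rightarrow> 'a \<Rightarrow> real" where
  "right_dir_deriv k x v = Lim (at_right 0) (\<lambda>s. (k (x + s *\<^sub>R v) - k x) / s)"

definition locally_lipschitz :: "('a::metric_space \<Rightarrow> real) \<Rightarrow> bool" where
  "locally_lipschitz k \<longleftrightarrow>
     (\<forall>x. \<exists>e>0. \<exists>L. \<forall>y\<in>ball x e. \<forall>z\<in>ball x e. \<bar>k y - k z\<bar> \<le> L * dist y z)"

definition coercive :: "('a::real_normed_vector \<Rightarrow> real) \<Rightarrow> bool" where
  "coercive k \<longleftrightarrow> continuous_on UNIV k \<and> filterlim k at_top at_infinity"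

definition global_diffeo :: "('a::real_normed_vector \<Rightarrow> 'b::real_normed_vector) \<Rightarrow> bool" where
  "global_diffeo f \<longleftrightarrow>
     (\<exists>f' g g'. bij f \<and> (\<forall>x. g (f x) = x) \<and> (\<forall>y. f (g y) = y)
        \<and> (\<forall>x. (f has_derivative blinfun_apply (f' x)) (at x)) \<and> continuous_on UNIV f'
        \<and> (\<forall>y. (g has_derivative blinfun_apply (g' y)) (at y)) \<and> continuous_on UNIV g')"

end

theory Submission
  imports Defs
begin

text \<open>Continuation along lifted segments. Since \<open>f'\<close> is a continuous field of isomorphisms,
  \<open>f\<close> is locally invertible with constants that are uniform on compact sets. For a target \<open>z\<close>,
  the segment \<open>t \<mapsto> f 0 + t (z - f 0)\<close>, \<open>t \<in> [0, 1]\<close>, is lifted through \<open>f\<close> starting at \<open>0\<close>: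
  lifts are unique, and local inverses continue a lift past any \<open>T < 1\<close>. A lift can only fail
  to reach \<open>t = 1\<close> by escaping to infinity, and \<open>k\<close> forbids this: along a lift with velocity
  \<open>f'(x)\<^sup>-\<^sup>1 d\<close> the upper right derivative of \<open>k\<close> is at most \<open>M \<parallel>d\<parallel>\<close>, so the lift stays in a
  sublevel set of \<open>k\<close>, which is bounded by coercivity. There \<open>\<parallel>f'\<^sup>-\<^sup>1\<parallel>\<close> is bounded, so the lift is
  Lipschitz and extends to the endpoint of its interval. The endpoints of the lifts form a
  continuous right inverse of \<open>f\<close>; it is also a left inverse, because it fixes the points of a
  clopen set containing \<open>0\<close>, and the inverse function theorem makes it \<open>C\<^sup>1\<close>.\<close>

section \<open>Bounded linear isomorphisms\<close>

lemma inv_isom_compose: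
  assumes "is_isom T"
  shows "inv_isom T o\<^sub>L T = id_blinfun" and "T o\<^sub>L inv_isom T = id_blinfun"
proof -
  obtain S where S: "S o\<^sub>L T = id_blinfun" "T o\<^sub>L S = id_blinfun"
    using assms unfolding is_isom_def by blast
  have unique: "S' = S" if "S' o\<^sub>L T = id_blinfun \<and> T o\<^sub>L S' = id_blinfun" for S'
  proof -
    have "S' = S' o\<^sub>L (T o\<^sub>L S)" using S by (auto intro: blinfun_eqI)
    also have "\<dots> = (S' o\<^sub>L T) o\<^sub>L S" by (auto intro: blinfun_eqI)
    also have "\<dots> = id_blinfun o\<^sub>L S" using that by simp
    also have "\<dots> = S" by (rule blinfun_eqI) simp
    finally show ?thesis .
  qed
  have "inv_isom T = S"
    unfolding inv_isom_def by (rule the_equality) (use S unique in blast)+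
  then show "inv_isom T o\<^sub>L T = id_blinfun" "T o\<^sub>L inv_isom T = id_blinfun"
    using S by simp_all
qed

lemma inv_isom_apply [simp]: "is_isom T \<Longrightarrow> inv_isom T (T x) = x"
  by (metis inv_isom_compose(1) blinfun_apply_blinfun_compose blinfun_apply_id_blinfun)

lemma apply_inv_isom [simp]: "is_isom T \<Longrightarrow> T (inv_isom T y) = y"
  by (metis inv_isom_compose(2) blinfun_apply_blinfun_compose blinfun_apply_id_blinfun)

lemma inv_isom_diff:
  assumes "is_isom S" "is_isom T"
  shows "inv_isom S - inv_isom T = inv_isom S o\<^sub>L (T - S) o\<^sub>L inv_isom T"
proof (rule blinfun_eqI)
  fix y
  show "(inv_isom S - inv_isom T) y = (inv_isom S o\<^sub>L (T - S) o\<^sub>L inv_isom T) y"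
    using assms by (simp add: blinfun.diff_left blinfun.diff_right)
qed

lemma norm_inv_isom_perturb:
  assumes S: "is_isom S" and T: "is_isom T" and small: "norm (S - T) * norm (inv_isom T) \<le> 1/2"
  shows "norm (inv_isom S) \<le> 2 * norm (inv_isom T)"
    and "norm (inv_isom S - inv_isom T) \<le> 2 * norm (inv_isom T)^2 * norm (S - T)"
proof -
  have diff: "norm (inv_isom S - inv_isom T) \<le> norm (inv_isom S) * (norm (S - T) * norm (inv_isom T))"
  proof -
    have "norm (inv_isom S - inv_isom T) \<le> norm (inv_isom S o\<^sub>L (T - S)) * norm (inv_isom T)"
      unfolding inv_isom_diff[OF S T] by (rule norm_blinfun_compose)
    also have "\<dots> \<le> norm (inv_isom S) * norm (T - S) * norm (inv_isom T)"
      by (intro mult_right_mono norm_blinfun_compose) auto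
    finally show ?thesis by (simp add: norm_minus_commute mult.assoc)
  qed
  also have "\<dots> \<le> norm (inv_isom S) / 2"
    using mult_left_mono[OF small, of "norm (inv_isom S)"] by simp
  finally have "norm (inv_isom S - inv_isom T) \<le> norm (inv_isom S) / 2" .
  moreover have "norm (inv_isom S) \<le> norm (inv_isom T) + norm (inv_isom S - inv_isom T)"
    by (metis add.commute diff_add_cancel norm_triangle_ineq)
  ultimately show le: "norm (inv_isom S) \<le> 2 * norm (inv_isom T)" by simp
  have "norm (inv_isom S) * (norm (S - T) * norm (inv_isom T))
      \<le> (2 * norm (inv_isom T)) * (norm (S - T) * norm (inv_isom T))"
    using le by (intro mult_right_mono) auto
  with diff show "norm (inv_isom S - inv_isom T) \<le> 2 * norm (inv_isom T)^2 * norm (S - T)"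
    by (simp add: power2_eq_square mult_ac)
qed

lemma continuous_on_inv_isom:
  fixes F :: "'c::metric_space \<Rightarrow> ('a::real_normed_vector \<Rightarrow>\<^sub>L 'b::real_normed_vector)"
  assumes contF: "continuous_on U F" and iso: "\<And>x. x \<in> U \<Longrightarrow> is_isom (F x)"
  shows "continuous_on U (\<lambda>x. inv_isom (F x))"
  unfolding continuous_on_iff
proof (intro ballI allI impI)
  fix x e assume x: "x \<in> U" and e: "(0::real) < e"
  define n where "n = norm (inv_isom (F x)) + 1"
  have n: "n \<ge> 1" "norm (inv_isom (F x)) \<le> n" by (auto simp: n_def)
  define e' where "e' = min (1/(2*n)) (e/(4*n^2))"
  have e': "e' > 0" using n e by (auto simp: e'_def)
  obtain d where d: "d > 0" "\<And>x'. x' \<in> U \<Longrightarrow> dist x' x < d \<Longrightarrow> dist (F x') (F x) < e'"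
    using contF x e' unfolding continuous_on_iff by blast
  show "\<exists>d>0. \<forall>x'\<in>U. dist x' x < d \<longrightarrow> dist (inv_isom (F x')) (inv_isom (F x)) < e"
  proof (intro exI conjI ballI impI)
    fix x' assume x': "x' \<in> U" "dist x' x < d"
    have close: "norm (F x' - F x) < e'" using d(2)[OF x'] by (simp add: dist_norm)
    have "norm (F x' - F x) * norm (inv_isom (F x)) \<le> e' * n"
      using close n e' by (intro mult_mono) auto
    also have "\<dots> \<le> 1/(2*n) * n" using n by (intro mult_right_mono) (auto simp: e'_def)
    finally have small: "norm (F x' - F x) * norm (inv_isom (F x)) \<le> 1/2" using n by simp
    have "norm (inv_isom (F x') - inv_isom (F x)) \<le> 2 * norm (inv_isom (F x))^2 * norm (F x' - F x)"
      by (rule norm_inv_isom_perturb(2)[OF iso[OF x'(1)] iso[OF x] small])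
    also have "\<dots> \<le> 2 * n^2 * e'"
      using close n e' by (intro mult_mono power_mono) auto
    also have "\<dots> \<le> 2 * n^2 * (e/(4*n^2))" using n by (intro mult_left_mono) (auto simp: e'_def)
    also have "\<dots> < e" using n e by (simp add: field_simps)
    finally show "dist (inv_isom (F x')) (inv_isom (F x)) < e" by (simp add: dist_norm)
  qed (rule d(1))
qed

section \<open>Local inversion\<close>

definition locally_invertible ::
    "('a::real_normed_vector \<Rightarrow> 'b::real_normed_vector) \<Rightarrow> 'a \<Rightarrow> real \<Rightarrow> real \<Rightarrow> bool" where
  "locally_invertible f q \<rho> c \<longleftrightarrow>
     (\<forall>x1\<in>cball q \<rho>. \<forall>x2\<in>cball q \<rho>. norm (x1 - x2) \<le> c * norm (f x1 - f x2)) \<and>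
     (\<forall>w. norm (w - f q) < \<rho> / c \<longrightarrow> (\<exists>x\<in>ball q \<rho>. f x = w))"

lemma locally_invertible_lipschitz:
  "locally_invertible f q \<rho> c \<Longrightarrow> x1 \<in> cball q \<rho> \<Longrightarrow> x2 \<in> cball q \<rho> \<Longrightarrow>
    norm (x1 - x2) \<le> c * norm (f x1 - f x2)"
  unfolding locally_invertible_def by blast

lemma locally_invertible_surj:
  "locally_invertible f q \<rho> c \<Longrightarrow> norm (w - f q) < \<rho> / c \<Longrightarrow> \<exists>x\<in>ball q \<rho>. f x = w"
  unfolding locally_invertible_def by blast

lemma locally_invertible_inj:
  "locally_invertible f q \<rho> c \<Longrightarrow> x1 \<in> cball q \<rho> \<Longrightarrow> x2 \<in> cball q \<rho> \<Longrightarrow> f x1 = f x2 \<Longrightarrow> x1 = x2"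
  using locally_invertible_lipschitz[of f q \<rho> c x1 x2] by simp

lemma locally_invertible_choice:
  assumes inv: "\<And>u. u \<in> S \<Longrightarrow> locally_invertible f (\<gamma>0 u) \<rho> c"
    and target: "\<And>u. u \<in> S \<Longrightarrow> norm (p u - f (\<gamma>0 u)) < \<rho> / c"
  obtains \<gamma> where "\<And>u. u \<in> S \<Longrightarrow> \<gamma> u \<in> cball (\<gamma>0 u) \<rho>" "\<And>u. u \<in> S \<Longrightarrow> f (\<gamma> u) = p u"
proof -
  have "\<forall>u\<in>S. \<exists>x. x \<in> cball (\<gamma>0 u) \<rho> \<and> f x = p u"
  proof
    fix u assume "u \<in> S"
    then obtain x where "x \<in> ball (\<gamma>0 u) \<rho>" "f x = p u"
      using locally_invertible_surj[OF inv target] by blast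
    then show "\<exists>x. x \<in> cball (\<gamma>0 u) \<rho> \<and> f x = p u" by (meson mem_ball_imp_mem_cball)
  qed
  then obtain \<gamma> where "\<forall>u\<in>S. \<gamma> u \<in> cball (\<gamma>0 u) \<rho> \<and> f (\<gamma> u) = p u" by (metis bchoice)
  then show ?thesis using that by blast
qed

lemma newton_map_half_lipschitz:
  assumes deriv: "\<And>x. x \<in> S \<Longrightarrow> (f has_derivative blinfun_apply (f' x)) (at x within S)"
    and "convex S" and A: "is_isom A" and beta: "norm (inv_isom A) \<le> \<beta>" "0 < \<beta>"
    and close: "\<And>x. x \<in> S \<Longrightarrow> norm (f' x - A) \<le> 1 / (2 * \<beta>)"
    and x: "x1 \<in> S" "x2 \<in> S"
  shows "norm ((x1 - inv_isom A (f x1)) - (x2 - inv_isom A (f x2))) \<le> 1/2 * norm (x1 - x2)"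
proof (rule differentiable_bound[OF \<open>convex S\<close> _ _ x])
  let ?B = "inv_isom A"
  show "((\<lambda>x. x - ?B (f x)) has_derivative (\<lambda>h. h - ?B (f' x h))) (at x within S)" if "x \<in> S" for x
    using deriv[OF that] by (auto intro!: derivative_eq_intros)
  show "onorm (\<lambda>h. h - ?B (f' x h)) \<le> 1/2" if "x \<in> S" for x
  proof (rule onorm_bound)
    fix h
    have "h - ?B (f' x h) = ?B ((A - f' x) h)"
      using A by (simp add: blinfun.diff_left blinfun.diff_right)
    also have "norm \<dots> \<le> \<beta> * (norm (A - f' x) * norm h)"
      using beta by (intro order_trans[OF norm_blinfun] mult_mono norm_blinfun) auto
    also have "\<dots> \<le> \<beta> * (1 / (2 * \<beta>) * norm h)"
      using close[OF that] beta by (intro mult_left_mono mult_right_mono) (auto simp: norm_minus_commute)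
    finally show "norm (h - ?B (f' x h)) \<le> 1/2 * norm h" using beta by simp
  qed simp
qed

text \<open>The map \<open>x \<mapsto> x - A\<^sup>-\<^sup>1 (f x - w)\<close> is a contraction of \<open>cball q \<rho>\<close> into itself;
  its fixed point solves \<open>f x = w\<close>.\<close>
lemma deriv_near_isom_surj:
  fixes f :: "'a::banach \<Rightarrow> 'b::real_normed_vector"
  assumes deriv: "\<And>x. x \<in> cball q \<rho> \<Longrightarrow> (f has_derivative blinfun_apply (f' x)) (at x within cball q \<rho>)"
    and A: "is_isom A" and beta: "norm (inv_isom A) \<le> \<beta>" "0 < \<beta>" and rho: "0 < \<rho>"
    and close: "\<And>x. x \<in> cball q \<rho> \<Longrightarrow> norm (f' x - A) \<le> 1 / (2 * \<beta>)"
    and w: "norm (w - f q) < \<rho> / (2 * \<beta>)"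
  shows "\<exists>x\<in>ball q \<rho>. f x = w"
proof -
  define B where "B = inv_isom A"
  define \<Phi> where "\<Phi> x = x - B (f x - w)" for x
  have contr: "norm (\<Phi> x1 - \<Phi> x2) \<le> 1/2 * norm (x1 - x2)" if "x1 \<in> cball q \<rho>" "x2 \<in> cball q \<rho>" for x1 x2
    using newton_map_half_lipschitz[OF deriv convex_cball A beta close that]
    by (simp add: \<Phi>_def B_def blinfun.diff_right algebra_simps)
  have "norm (B (f q - w)) \<le> \<beta> * norm (w - f q)"
    using norm_blinfun[of B "f q - w"] mult_right_mono[OF beta(1) norm_ge_zero[of "f q - w"]]
    by (simp add: B_def norm_minus_commute)
  also have "\<dots> < \<beta> * (\<rho> / (2 * \<beta>))" using w beta by (intro mult_strict_left_mono) auto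
  finally have Bq: "norm (\<Phi> q - q) < \<rho> / 2" using beta by (simp add: \<Phi>_def)
  have inside: "norm (\<Phi> x - q) < \<rho>" if "x \<in> cball q \<rho>" for x
  proof -
    have "norm (\<Phi> x - q) \<le> norm (\<Phi> x - \<Phi> q) + norm (\<Phi> q - q)"
      using norm_triangle_ineq[of "\<Phi> x - \<Phi> q" "\<Phi> q - q"] by simp
    moreover have "norm (\<Phi> x - \<Phi> q) \<le> 1/2 * \<rho>"
      using contr[OF that, of q] that rho by (auto simp: dist_norm norm_minus_commute)
    ultimately show ?thesis using Bq by simp
  qed
  have "\<exists>!x\<in>cball q \<rho>. \<Phi> x = x"
  proof (rule Banach_fix[of _ "1/2"])
    show "complete (cball q \<rho>)" by (simp add: complete_eq_closed)
    show "\<Phi> ` cball q \<rho> \<subseteq> cball q \<rho>"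
      using inside by (force simp: dist_norm norm_minus_commute)
    show "dist (\<Phi> x) (\<Phi> y) \<le> 1/2 * dist x y" if "x \<in> cball q \<rho>" "y \<in> cball q \<rho>" for x y
      using contr[OF that] by (simp add: dist_norm)
  qed (use rho in auto)
  then obtain x where x: "x \<in> cball q \<rho>" "\<Phi> x = x" by blast
  then have "A (B (f x - w)) = 0" by (simp add: \<Phi>_def)
  then have "f x = w" using A by (simp add: B_def)
  moreover have "x \<in> ball q \<rho>" using inside[OF x(1)] x(2) by (simp add: dist_norm norm_minus_commute)
  ultimately show ?thesis by blast
qed

lemma locally_invertible_if_deriv_near_isom:
  fixes f :: "'a::banach \<Rightarrow> 'b::real_normed_vector"
  assumes deriv: "\<And>x. x \<in> cball q \<rho> \<Longrightarrow> (f has_derivative blinfun_apply (f' x)) (at x within cball q \<rho>)"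
    and A: "is_isom A" and beta: "norm (inv_isom A) \<le> \<beta>" "0 < \<beta>" and rho: "0 < \<rho>"
    and close: "\<And>x. x \<in> cball q \<rho> \<Longrightarrow> norm (f' x - A) \<le> 1 / (2 * \<beta>)"
  shows "locally_invertible f q \<rho> (2 * \<beta>)"
proof -
  define B where "B = inv_isom A"
  have lip: "norm (x1 - x2) \<le> 2 * \<beta> * norm (f x1 - f x2)" if "x1 \<in> cball q \<rho>" "x2 \<in> cball q \<rho>" for x1 x2
  proof -
    have "x1 - x2 = ((x1 - B (f x1)) - (x2 - B (f x2))) + B (f x1 - f x2)"
      by (simp add: blinfun.diff_right)
    then have "norm (x1 - x2) \<le> norm ((x1 - B (f x1)) - (x2 - B (f x2))) + norm (B (f x1 - f x2))"
      by (metis norm_triangle_ineq)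
    also have "\<dots> \<le> 1/2 * norm (x1 - x2) + \<beta> * norm (f x1 - f x2)"
    proof (rule add_mono)
      show "norm ((x1 - B (f x1)) - (x2 - B (f x2))) \<le> 1/2 * norm (x1 - x2)"
        unfolding B_def by (rule newton_map_half_lipschitz[OF deriv convex_cball A beta close that])
      show "norm (B (f x1 - f x2)) \<le> \<beta> * norm (f x1 - f x2)"
        using norm_blinfun[of B "f x1 - f x2"] mult_right_mono[OF beta(1) norm_ge_zero[of "f x1 - f x2"]]
        by (simp add: B_def)
    qed
    finally show ?thesis by simp
  qed
  show ?thesis
    using lip deriv_near_isom_surj[OF deriv A beta rho close] unfolding locally_invertible_def by blast
qed

lemma continuous_on_near_centres:
  assumes cont: "continuous_on S \<gamma>0" and "c > 0"
    and inv: "\<And>u. u \<in> S \<Longrightarrow> locally_invertible f (\<gamma>0 u) \<rho> c"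
    and near: "\<And>u. u \<in> S \<Longrightarrow> dist (\<gamma> u) (\<gamma>0 u) < \<rho> / 2"
    and lip: "L-lipschitz_on S (\<lambda>u. f (\<gamma> u))"
  shows "continuous_on S \<gamma>"
  unfolding continuous_on_iff
proof (intro ballI allI impI)
  fix u0 and e :: real assume u0: "u0 \<in> S" and "0 < e"
  have "0 < \<rho> / 2" using near[OF u0] by (metis zero_le_dist le_less_trans)
  then obtain \<eta> where "\<eta> > 0" and \<eta>: "\<And>u. u \<in> S \<Longrightarrow> dist u u0 < \<eta> \<Longrightarrow> dist (\<gamma>0 u) (\<gamma>0 u0) < \<rho> / 2"
    using cont u0 unfolding continuous_on_iff by metis
  have pos: "c * L + 1 > 0" using \<open>c > 0\<close> lipschitz_on_nonneg[OF lip] by (simp add: add_nonneg_pos)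
  have "dist (\<gamma> u) (\<gamma> u0) < e" if u: "u \<in> S" "dist u u0 < min \<eta> (e / (c * L + 1))" for u
  proof -
    have "dist (\<gamma>0 u0) (\<gamma> u) \<le> dist (\<gamma>0 u0) (\<gamma>0 u) + dist (\<gamma>0 u) (\<gamma> u)" by (rule dist_triangle)
    also have "\<dots> < \<rho> / 2 + \<rho> / 2"
      using \<eta>[of u] near[of u] u by (intro add_strict_mono) (auto simp: dist_commute)
    finally have in_u: "\<gamma> u \<in> cball (\<gamma>0 u0) \<rho>" by simp
    have "dist (\<gamma> u0) (\<gamma>0 u0) \<le> \<rho>" using near[OF u0] zero_le_dist[of "\<gamma> u0" "\<gamma>0 u0"] by linarith
    then have in_u0: "\<gamma> u0 \<in> cball (\<gamma>0 u0) \<rho>" by (simp add: dist_commute)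
    have "dist (\<gamma> u) (\<gamma> u0) \<le> c * dist (f (\<gamma> u)) (f (\<gamma> u0))"
      using locally_invertible_lipschitz[OF inv[OF u0] in_u in_u0] by (simp add: dist_norm)
    also have "\<dots> \<le> c * (L * dist u u0)"
      using lipschitz_onD[OF lip u(1) u0] \<open>c > 0\<close> by (intro mult_left_mono) auto
    also have "\<dots> \<le> (c * L + 1) * dist u u0" by (simp add: algebra_simps)
    also have "\<dots> < (c * L + 1) * (e / (c * L + 1))" using u pos by (intro mult_strict_left_mono) auto
    also have "\<dots> = e" using pos by simp
    finally show ?thesis .
  qed
  then show "\<exists>d>0. \<forall>u\<in>S. dist u u0 < d \<longrightarrow> dist (\<gamma> u) (\<gamma> u0) < e"
    using \<open>\<eta> > 0\<close> \<open>0 < e\<close> pos by (intro exI[of _ "min \<eta> (e / (c * L + 1))"]) auto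
qed

section \<open>Continuation on the real line\<close>

lemma real_continuation_induct:
  fixes T :: real
  assumes "0 \<le> T"
    and left: "\<And>t. 0 \<le> t \<Longrightarrow> t \<le> T \<Longrightarrow> (\<And>u. 0 \<le> u \<Longrightarrow> u < t \<Longrightarrow> P u) \<Longrightarrow> P t"
    and right: "\<And>t. 0 \<le> t \<Longrightarrow> t < T \<Longrightarrow> (\<And>u. 0 \<le> u \<Longrightarrow> u \<le> t \<Longrightarrow> P u) \<Longrightarrow>
                   \<exists>\<eta>>0. \<forall>u. t < u \<longrightarrow> u < t + \<eta> \<longrightarrow> u \<le> T \<longrightarrow> P u"
    and "0 \<le> t" "t \<le> T"
  shows "P t"
proof -
  define S where "S = {s. 0 \<le> s \<and> s \<le> T \<and> (\<forall>u. 0 \<le> u \<longrightarrow> u \<le> s \<longrightarrow> P u)}"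
  have "0 \<in> S" using left[of 0] \<open>0 \<le> T\<close> by (auto simp: S_def)
  have bdd: "bdd_above S" by (auto simp: S_def bdd_above_def)
  define \<sigma> where "\<sigma> = Sup S"
  have "0 \<le> \<sigma>" unfolding \<sigma>_def using \<open>0 \<in> S\<close> bdd by (rule cSup_upper)
  moreover have "\<sigma> \<le> T" unfolding \<sigma>_def using \<open>0 \<in> S\<close> by (intro cSup_least) (auto simp: S_def)
  ultimately have \<sigma>: "0 \<le> \<sigma>" "\<sigma> \<le> T" .
  have below: "P u" if u: "0 \<le> u" "u < \<sigma>" for u
  proof -
    obtain s where "s \<in> S" "u < s" using less_cSupD[of S u] \<open>0 \<in> S\<close> u(2) by (auto simp: \<sigma>_def)
    then show ?thesis using u by (auto simp: S_def)
  qed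
  then have "P \<sigma>" using left[OF \<sigma>] by blast
  then have upto: "P u" if "0 \<le> u" "u \<le> \<sigma>" for u
    using below that by (cases "u = \<sigma>") auto
  have "\<sigma> = T"
  proof (rule ccontr)
    assume "\<sigma> \<noteq> T"
    with \<sigma> have lt: "\<sigma> < T" by simp
    obtain \<eta> where \<eta>: "\<eta> > 0" "\<And>u. \<sigma> < u \<Longrightarrow> u < \<sigma> + \<eta> \<Longrightarrow> u \<le> T \<Longrightarrow> P u"
      using right[OF \<sigma>(1) lt upto] by blast
    define s where "s = min (\<sigma> + \<eta>/2) T"
    have "s \<in> S" unfolding S_def
    proof (intro CollectI conjI allI impI)
      show "0 \<le> s" "s \<le> T" using \<sigma> \<eta> lt by (simp_all add: s_def)
      fix u assume "0 \<le> u" "u \<le> s"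
      then show "P u"
        using upto[of u] \<eta>(2)[of u] \<eta>(1) by (cases "u \<le> \<sigma>") (auto simp: s_def)
    qed
    then have "s \<le> \<sigma>" unfolding \<sigma>_def using bdd by (rule cSup_upper)
    then show False using \<eta>(1) lt by (simp add: s_def)
  qed
  then show ?thesis using upto assms(4,5) by simp
qed

lemma continuous_left_limit_in_closed:
  fixes h :: "real \<Rightarrow> 'a::topological_space"
  assumes "0 < t" "continuous_on {0..t} h" "\<And>u. 0 \<le> u \<Longrightarrow> u < t \<Longrightarrow> h u \<in> F" "closed F"
  shows "h t \<in> F"
proof -
  have "h ` closure {0..<t} \<subseteq> F"
    using assms by (intro image_closure_subset) auto
  then show ?thesis using assms(1) by auto
qed

lemma bound_from_right_increments:
  fixes \<phi> :: "real \<Rightarrow> real"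
  assumes "0 \<le> T" and cont: "continuous_on {0..T} \<phi>"
    and step: "\<And>t \<epsilon>. 0 \<le> t \<Longrightarrow> t < T \<Longrightarrow> \<epsilon> > 0 \<Longrightarrow>
       \<exists>\<eta>>0. \<forall>s. 0 < s \<longrightarrow> s < \<eta> \<longrightarrow> t + s \<le> T \<longrightarrow> \<phi> (t + s) \<le> \<phi> t + (L + \<epsilon>) * s"
    and t: "0 \<le> t" "t \<le> T"
  shows "\<phi> t \<le> \<phi> 0 + L * t"
proof -
  have slope: "\<phi> t \<le> \<phi> 0 + (L + \<epsilon>) * t" if "\<epsilon> > 0" for \<epsilon>
  proof (rule real_continuation_induct[OF \<open>0 \<le> T\<close> _ _ t, where P = "\<lambda>t. \<phi> t \<le> \<phi> 0 + (L + \<epsilon>) * t"])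
    fix t assume t: "0 \<le> t" "t \<le> T" and IH: "\<And>u. 0 \<le> u \<Longrightarrow> u < t \<Longrightarrow> \<phi> u \<le> \<phi> 0 + (L + \<epsilon>) * u"
    show "\<phi> t \<le> \<phi> 0 + (L + \<epsilon>) * t"
    proof (cases "t = 0")
      case False
      have "(\<lambda>u. \<phi> u - \<phi> 0 - (L + \<epsilon>) * u) t \<in> {..0}"
      proof (rule continuous_left_limit_in_closed[where h = "\<lambda>u. \<phi> u - \<phi> 0 - (L + \<epsilon>) * u"])
        show "continuous_on {0..t} (\<lambda>u. \<phi> u - \<phi> 0 - (L + \<epsilon>) * u)"
          by (intro continuous_intros continuous_on_subset[OF cont]) (use t in auto)
        show "(\<lambda>u. \<phi> u - \<phi> 0 - (L + \<epsilon>) * u) u \<in> {..0}" if "0 \<le> u" "u < t" for u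
          using IH[OF that] by simp
      qed (use t False in auto)
      then show ?thesis by simp
    qed simp
  next
    fix t assume t: "0 \<le> t" "t < T" and IH: "\<And>u. 0 \<le> u \<Longrightarrow> u \<le> t \<Longrightarrow> \<phi> u \<le> \<phi> 0 + (L + \<epsilon>) * u"
    obtain \<eta> where \<eta>: "\<eta> > 0" "\<And>s. 0 < s \<Longrightarrow> s < \<eta> \<Longrightarrow> t + s \<le> T \<Longrightarrow> \<phi> (t + s) \<le> \<phi> t + (L + \<epsilon>) * s"
      using step[OF t \<open>\<epsilon> > 0\<close>] by blast
    have "\<phi> u \<le> \<phi> 0 + (L + \<epsilon>) * u" if u: "t < u" "u < t + \<eta>" "u \<le> T" for u
    proof -
      have "\<phi> u \<le> \<phi> t + (L + \<epsilon>) * (u - t)" using \<eta>(2)[of "u - t"] u by auto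
      also have "\<dots> \<le> \<phi> 0 + (L + \<epsilon>) * t + (L + \<epsilon>) * (u - t)" using IH[of t] t by auto
      finally show ?thesis by (simp add: algebra_simps)
    qed
    then show "\<exists>\<eta>>0. \<forall>u. t < u \<longrightarrow> u < t + \<eta> \<longrightarrow> u \<le> T \<longrightarrow> \<phi> u \<le> \<phi> 0 + (L + \<epsilon>) * u"
      using \<eta>(1) by blast
  qed
  show ?thesis
  proof (rule field_le_epsilon)
    fix e :: real assume e: "0 < e"
    have "\<phi> t \<le> \<phi> 0 + (L + e / (t + 1)) * t" using slope[of "e / (t + 1)"] e t by auto
    also have "\<dots> = \<phi> 0 + L * t + e * (t / (t + 1))" using t by (simp add: field_simps)
    also have "\<dots> \<le> \<phi> 0 + L * t + e"
      using e t by (simp add: divide_le_eq algebra_simps)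
    finally show "\<phi> t \<le> \<phi> 0 + L * t + e" .
  qed
qed

section \<open>Right directional derivatives\<close>

lemma right_dir_deriv_eqI: "has_right_dir_deriv k x v D \<Longrightarrow> right_dir_deriv k x v = D"
  unfolding has_right_dir_deriv_def right_dir_deriv_def
  by (rule tendsto_Lim[OF trivial_limit_at_right_real])

lemma has_right_dir_deriv_zero: "has_right_dir_deriv k x 0 0"
  unfolding has_right_dir_deriv_def by simp

lemma has_right_dir_deriv_scaleR:
  assumes D: "has_right_dir_deriv k x v D" and "(l::real) > 0"
  shows "has_right_dir_deriv k x (l *\<^sub>R v) (l * D)"
proof -
  have lin: "filterlim (\<lambda>s. l * s) (at_right 0) (at_right (0::real))"
    unfolding filterlim_at
  proof
    show "\<forall>\<^sub>F s in at_right 0. l * s \<in> {0<..} \<and> l * s \<noteq> 0"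
      unfolding eventually_at_right_field using \<open>l > 0\<close> by (intro exI[of _ 1]) auto
    show "((\<lambda>s. l * s) \<longlongrightarrow> 0) (at_right 0)"
      using tendsto_mult_left[OF tendsto_ident_at[of 0 "{0<..}"], of l] by simp
  qed
  have lim: "((\<lambda>s. l * ((k (x + (l * s) *\<^sub>R v) - k x) / (l * s))) \<longlongrightarrow> l * D) (at_right 0)"
    by (rule tendsto_mult_left[OF filterlim_compose[OF D[unfolded has_right_dir_deriv_def] lin]])
  have "\<forall>\<^sub>F s in at_right 0.
      l * ((k (x + (l * s) *\<^sub>R v) - k x) / (l * s)) = (k (x + s *\<^sub>R (l *\<^sub>R v)) - k x) / s"
    unfolding eventually_at_right_field using \<open>l > 0\<close> by (intro exI[of _ 1]) (simp add: mult.commute)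
  then show ?thesis unfolding has_right_dir_deriv_def by (rule tendsto_cong[THEN iffD1, OF _ lim])
qed

lemma right_dir_deriv_eq_derivative:
  fixes h :: "'a::real_normed_vector \<Rightarrow> real"
  assumes "(h has_derivative blinfun_apply H) (at x)"
  shows "right_dir_deriv h x v = H v"
proof -
  have ray: "((\<lambda>s::real. x + s *\<^sub>R v) has_derivative (\<lambda>s. s *\<^sub>R v)) (at 0 within {0<..})"
    by (auto intro!: derivative_eq_intros)
  have "((\<lambda>s. h (x + s *\<^sub>R v)) has_derivative (\<lambda>s. H (s *\<^sub>R v))) (at 0 within {0<..})"
    using has_derivative_compose[OF ray] assms by simp
  moreover have "(\<lambda>s. H (s *\<^sub>R v)) = (*) (H v)" by (rule ext) (simp add: blinfun.scaleR_right)
  ultimately have "((\<lambda>s. h (x + s *\<^sub>R v)) has_field_derivative H v) (at 0 within {0<..})"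
    by (simp add: has_field_derivative_def)
  then show ?thesis
    unfolding has_field_derivative_iff by (intro right_dir_deriv_eqI) (simp add: has_right_dir_deriv_def)
qed

text \<open>Positive homogeneity of \<open>D\<^sup>+\<close> turns a bound on unit vectors into a linear bound.\<close>
lemma right_dir_deriv_linear_bound:
  fixes B :: "'a::real_normed_vector \<Rightarrow> ('b::real_normed_vector \<Rightarrow>\<^sub>L 'a)"
  assumes exists: "\<And>x v. \<exists>D. has_right_dir_deriv k x v D"
    and bdd: "bdd_above {right_dir_deriv k x (B x u) | x u. norm u = 1}"
  obtains M where "M \<ge> 0" "\<And>x d. right_dir_deriv k x (B x d) \<le> M * norm d"
proof -
  obtain M0 where M0: "\<And>x u. norm u = 1 \<Longrightarrow> right_dir_deriv k x (B x u) \<le> M0"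
    using bdd unfolding bdd_above_def by blast
  have "right_dir_deriv k x (B x d) \<le> max M0 0 * norm d" for x d
  proof (cases "d = 0")
    case True
    then show ?thesis using right_dir_deriv_eqI[OF has_right_dir_deriv_zero, of k x] by simp
  next
    case False
    define u where "u = (1 / norm d) *\<^sub>R d"
    have u: "norm u = 1" "B x d = norm d *\<^sub>R B x u"
      using False by (simp_all add: u_def blinfun.scaleR_right)
    obtain D where D: "has_right_dir_deriv k x (B x u) D" using exists by blast
    have "right_dir_deriv k x (B x d) = norm d * D"
      unfolding u(2) using False by (intro right_dir_deriv_eqI has_right_dir_deriv_scaleR[OF D]) simp
    also have "\<dots> \<le> norm d * max M0 0"
      using M0[OF u(1), of x] right_dir_deriv_eqI[OF D] by (intro mult_left_mono) auto
    finally show ?thesis by (simp add: mult.commute)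
  qed
  then show ?thesis by (intro that[of "max M0 0"]) auto
qed

lemma locally_lipschitzE:
  assumes "locally_lipschitz k"
  obtains e L where "e > 0" "L > 0" "\<And>y z. y \<in> ball x e \<Longrightarrow> z \<in> ball x e \<Longrightarrow> k y - k z \<le> L * dist y z"
proof -
  obtain e L where "e > 0" and L: "\<And>y z. y \<in> ball x e \<Longrightarrow> z \<in> ball x e \<Longrightarrow> \<bar>k y - k z\<bar> \<le> L * dist y z"
    using assms unfolding locally_lipschitz_def by blast
  show ?thesis
  proof (rule that[of e "max L 0 + 1"])
    fix y z assume yz: "y \<in> ball x e" "z \<in> ball x e"
    have "k y - k z \<le> L * dist y z" using L[OF yz] by (simp add: abs_le_iff)
    also have "\<dots> \<le> (max L 0 + 1) * dist y z" by (intro mult_right_mono) auto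
    finally show "k y - k z \<le> (max L 0 + 1) * dist y z" .
  qed (use \<open>e > 0\<close> in auto)
qed

lemma coercive_sublevel_bounded:
  assumes "coercive k"
  obtains R where "R > 0" "\<And>x. k x \<le> K \<Longrightarrow> norm x \<le> R"
proof -
  have "eventually (\<lambda>x. K + 1 \<le> k x) at_infinity"
    using assms unfolding coercive_def filterlim_at_top by blast
  then obtain b where b: "\<And>x. b \<le> norm x \<Longrightarrow> K + 1 \<le> k x" unfolding eventually_at_infinity by blast
  have "norm x \<le> max b 1" if "k x \<le> K" for x
    using b[of x] that by (cases "b \<le> norm x") auto
  then show ?thesis using that[of "max b 1"] by simp
qed

lemma right_increment_along_tangent:
  assumes "locally_lipschitz k" and D: "has_right_dir_deriv k x v D" and "\<epsilon> > 0"
    and tangent: "\<And>\<epsilon>'. \<epsilon>' > 0 \<Longrightarrow> \<exists>\<eta>>0. \<forall>s. 0 < s \<longrightarrow> s < \<eta> \<longrightarrow> P s \<longrightarrow>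
        norm (\<gamma> s - x - s *\<^sub>R v) \<le> \<epsilon>' * s"
  shows "\<exists>\<eta>>0. \<forall>s. 0 < s \<longrightarrow> s < \<eta> \<longrightarrow> P s \<longrightarrow> k (\<gamma> s) \<le> k x + (D + \<epsilon>) * s"
proof -
  obtain e L where "e > 0" "L > 0"
    and lip: "\<And>y z. y \<in> ball x e \<Longrightarrow> z \<in> ball x e \<Longrightarrow> k y - k z \<le> L * dist y z"
    by (rule locally_lipschitzE[OF \<open>locally_lipschitz k\<close>, of x]) blast
  have "\<forall>\<^sub>F s in at_right 0. (k (x + s *\<^sub>R v) - k x) / s < D + \<epsilon> / 2"
    using D \<open>\<epsilon> > 0\<close> unfolding has_right_dir_deriv_def by (intro order_tendstoD(2)) auto
  then obtain \<eta>1 where "\<eta>1 > 0"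
    and quot: "\<And>s. 0 < s \<Longrightarrow> s < \<eta>1 \<Longrightarrow> (k (x + s *\<^sub>R v) - k x) / s < D + \<epsilon> / 2"
    unfolding eventually_at_right_field by auto
  define \<epsilon>' where "\<epsilon>' = min 1 (\<epsilon> / (2 * L))"
  have "\<epsilon>' > 0" using \<open>\<epsilon> > 0\<close> \<open>L > 0\<close> by (simp add: \<epsilon>'_def)
  then obtain \<eta>2 where "\<eta>2 > 0"
    and tan: "\<And>s. 0 < s \<Longrightarrow> s < \<eta>2 \<Longrightarrow> P s \<Longrightarrow> norm (\<gamma> s - x - s *\<^sub>R v) \<le> \<epsilon>' * s"
    using tangent by blast
  define \<eta>3 where "\<eta>3 = e / (norm v + 1)"
  have pos: "norm v + 1 > 0" by (simp add: add_nonneg_pos)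
  have "\<eta>3 > 0" using \<open>e > 0\<close> pos by (simp add: \<eta>3_def)
  have "k (\<gamma> s) \<le> k x + (D + \<epsilon>) * s"
    if s: "0 < s" "s < min \<eta>1 (min \<eta>2 \<eta>3)" "P s" for s
  proof -
    have "s * (norm v + 1) < e" using s pos by (simp add: \<eta>3_def field_simps)
    moreover have "s * norm v \<le> s * (norm v + 1)" using s by simp
    ultimately have sv: "s * norm v < e" "s * (norm v + 1) < e" by linarith+
    have near: "norm (\<gamma> s - x - s *\<^sub>R v) \<le> \<epsilon>' * s" using tan s by simp
    also have "\<dots> \<le> s" using s by (simp add: \<epsilon>'_def)
    finally have "norm (\<gamma> s - x) \<le> s * norm v + s"
      using norm_triangle_ineq[of "\<gamma> s - x - s *\<^sub>R v" "s *\<^sub>R v"] s by simp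
    then have in_ball: "\<gamma> s \<in> ball x e" "x + s *\<^sub>R v \<in> ball x e"
      using sv s by (auto simp: dist_norm norm_minus_commute algebra_simps)
    have "k (\<gamma> s) - k (x + s *\<^sub>R v) \<le> L * norm (\<gamma> s - x - s *\<^sub>R v)"
      using lip[OF in_ball] by (simp add: dist_norm diff_diff_eq)
    also have "\<dots> \<le> L * (\<epsilon> / (2 * L) * s)"
    proof -
      have "\<epsilon>' * s \<le> \<epsilon> / (2 * L) * s" using s by (intro mult_right_mono) (auto simp: \<epsilon>'_def)
      then show ?thesis using order_trans[OF near] \<open>L > 0\<close> by (intro mult_left_mono) auto
    qed
    also have "\<dots> = \<epsilon> / 2 * s" using \<open>L > 0\<close> by simp
    finally have "k (\<gamma> s) - k (x + s *\<^sub>R v) \<le> \<epsilon> / 2 * s" .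
    moreover have "k (x + s *\<^sub>R v) - k x < (D + \<epsilon> / 2) * s"
      using quot[of s] s by (simp add: divide_less_eq)
    ultimately show ?thesis by (simp add: algebra_simps)
  qed
  then show ?thesis
    using \<open>\<eta>1 > 0\<close> \<open>\<eta>2 > 0\<close> \<open>\<eta>3 > 0\<close> by (intro exI[of _ "min \<eta>1 (min \<eta>2 \<eta>3)"]) auto
qed

lemma bdd_above_unit_values_iff:
  fixes L :: "'c \<Rightarrow> ('b::real_normed_vector \<Rightarrow>\<^sub>L real)"
  shows "bdd_above {L x u | x u. norm u = 1} \<longleftrightarrow> bdd_above (range (\<lambda>x. norm (L x)))"
proof
  assume "bdd_above {L x u | x u. norm u = 1}"
  then obtain M where M: "\<And>x u. norm u = 1 \<Longrightarrow> L x u \<le> M" unfolding bdd_above_def by blast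
  have "norm (L x) \<le> max M 0" for x
  proof (rule norm_blinfun_bound)
    fix w
    show "norm (L x w) \<le> max M 0 * norm w"
    proof (cases "w = 0")
      case False
      define u where "u = (1 / norm w) *\<^sub>R w"
      have "norm u = 1" "norm (- u) = 1" and w: "w = norm w *\<^sub>R u" using False by (simp_all add: u_def)
      then have "\<bar>L x u\<bar> \<le> max M 0" using M[of u x] M[of "- u" x] by (simp add: blinfun.minus_right)
      then show ?thesis
        by (subst w) (simp add: blinfun.scaleR_right abs_mult mult.commute mult_left_mono)
    qed simp
  qed simp
  then show "bdd_above (range (\<lambda>x. norm (L x)))" unfolding bdd_above_def by blast
next
  assume "bdd_above (range (\<lambda>x. norm (L x)))"
  then obtain N where N: "\<And>x. norm (L x) \<le> N" unfolding bdd_above_def by blast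
  have "L x u \<le> N" if "norm u = 1" for x u
    using norm_blinfun[of "L x" u] N[of x] that by simp
  then show "bdd_above {L x u | x u. norm u = 1}" unfolding bdd_above_def by blast
qed

lemma bdd_above_right_dir_deriv_iff:
  fixes h :: "'a::real_normed_vector \<Rightarrow> real" and B :: "'a \<Rightarrow> ('b::real_normed_vector \<Rightarrow>\<^sub>L 'a)"
  assumes "\<forall>x. (h has_derivative blinfun_apply (h' x)) (at x)"
  shows "bdd_above {right_dir_deriv h x (B x u) | x u. norm u = 1}
    \<longleftrightarrow> bdd_above (range (\<lambda>x. norm (h' x o\<^sub>L B x)))"
proof -
  have "right_dir_deriv h x v = h' x v" for x v using assms by (simp add: right_dir_deriv_eq_derivative)
  then have "{right_dir_deriv h x (B x u) | x u. norm u = 1} = {(h' x o\<^sub>L B x) u | x u. norm u = 1}"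
    by simp
  then show ?thesis using bdd_above_unit_values_iff[of "\<lambda>x. h' x o\<^sub>L B x"] by simp
qed

section \<open>Lifting segments through a local diffeomorphism\<close>

locale local_diffeo =
  fixes f :: "'a::banach \<Rightarrow> 'b::banach" and f' :: "'a \<Rightarrow> ('a \<Rightarrow>\<^sub>L 'b)"
  assumes deriv: "\<And>x. (f has_derivative blinfun_apply (f' x)) (at x)"
    and continuous_deriv: "continuous_on UNIV f'"
    and isom: "\<And>x. is_isom (f' x)"
begin

lemma continuous_f: "continuous_on UNIV f"
  by (rule continuous_at_imp_continuous_on) (auto intro: has_derivative_continuous[OF deriv])

text \<open>One radius serves all of \<open>K\<close>: a Lebesgue number of the cover of \<open>K\<close> by balls on which
  \<open>f'\<close> stays close to its value at the centre.\<close>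
lemma uniformly_locally_invertible:
  assumes K: "compact K"
  obtains \<rho> c where "\<rho> > 0" "c > 0" "\<forall>q\<in>K. locally_invertible f q \<rho> c"
proof -
  have "continuous_on K (\<lambda>x. norm (inv_isom (f' x)))"
    by (intro continuous_on_norm continuous_on_inv_isom continuous_on_subset[OF continuous_deriv] isom) auto
  then have "bounded ((\<lambda>x. norm (inv_isom (f' x))) ` K)"
    using K by (intro compact_imp_bounded compact_continuous_image)
  then obtain \<beta> where \<beta>: "\<beta> > 0" "\<And>p. p \<in> K \<Longrightarrow> norm (inv_isom (f' p)) \<le> \<beta>"
    unfolding bounded_pos by fastforce
  have "\<forall>p. \<exists>r>0. \<forall>x. dist x p < r \<longrightarrow> dist (f' x) (f' p) < 1 / (2 * \<beta>)"
    using continuous_deriv \<beta>(1) unfolding continuous_on_iff by simp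
  then obtain r where r: "\<And>p. r p > 0" "\<And>p x. dist x p < r p \<Longrightarrow> dist (f' x) (f' p) < 1 / (2 * \<beta>)"
    by metis
  have "K \<subseteq> \<Union>((\<lambda>p. ball p (r p)) ` K)" using r(1) by force
  then obtain e where e: "0 < e" "\<And>q. q \<in> K \<Longrightarrow> \<exists>p\<in>K. ball q e \<subseteq> ball p (r p)"
    by (rule Heine_Borel_lemma[OF K]) auto
  show ?thesis
  proof (rule that[of "e/2" "2 * \<beta>"])
    show "\<forall>q\<in>K. locally_invertible f q (e/2) (2 * \<beta>)"
    proof
      fix q assume q: "q \<in> K"
      then obtain p where p: "p \<in> K" "ball q e \<subseteq> ball p (r p)" using e(2) by blast
      have close: "norm (f' x - f' p) \<le> 1 / (2 * \<beta>)" if "x \<in> cball q (e/2)" for x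
      proof -
        have "x \<in> ball p (r p)" using that e(1) p(2) by (force simp: dist_commute)
        then show ?thesis using r(2)[of x p] by (simp add: dist_norm norm_minus_commute)
      qed
      show "locally_invertible f q (e/2) (2 * \<beta>)"
        using e(1) \<beta>(1) has_derivative_at_withinI[OF deriv]
        by (intro locally_invertible_if_deriv_near_isom[OF _ isom \<beta>(2)[OF p(1)] _ _ close]) auto
    qed
  qed (use e \<beta> in auto)
qed

lemma locally_invertible_at:
  obtains \<rho> c where "\<rho> > 0" "c > 0" "locally_invertible f x \<rho> c"
  using uniformly_locally_invertible[of "{x}"] by auto

definition segment_lift :: "'a \<Rightarrow> 'b \<Rightarrow> real \<Rightarrow> (real \<Rightarrow> 'a) \<Rightarrow> bool" where
  "segment_lift x0 d T \<gamma> \<longleftrightarrow> 0 \<le> T \<and> continuous_on {0..T} \<gamma> \<and> \<gamma> 0 = x0 \<and>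
     (\<forall>t\<in>{0..T}. f (\<gamma> t) = f x0 + t *\<^sub>R d)"

lemma segment_lift_zero: "segment_lift x0 d 0 (\<lambda>_. x0)"
  by (simp add: segment_lift_def)

lemma segment_lift_restrict:
  assumes "segment_lift x0 d T \<gamma>" "0 \<le> T'" "T' \<le> T"
  shows "segment_lift x0 d T' \<gamma>"
proof -
  have "continuous_on {0..T'} \<gamma>"
    by (rule continuous_on_subset[of "{0..T}"]) (use assms in \<open>auto simp: segment_lift_def\<close>)
  then show ?thesis using assms by (auto simp: segment_lift_def)
qed

lemma segment_lift_near:
  assumes "segment_lift x0 d T \<gamma>" "t \<in> {0..T}" "e > 0"
  obtains \<eta> where "\<eta> > 0" "\<And>u. u \<in> {0..T} \<Longrightarrow> dist u t < \<eta> \<Longrightarrow> dist (\<gamma> u) (\<gamma> t) < e"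
  using assms unfolding segment_lift_def continuous_on_iff by metis

lemma segment_lift_unique:
  assumes L1: "segment_lift x0 d T \<gamma>1" and L2: "segment_lift x0 d T \<gamma>2" and "0 \<le> t" "t \<le> T"
  shows "\<gamma>1 t = \<gamma>2 t"
proof (rule real_continuation_induct[where P = "\<lambda>t. \<gamma>1 t = \<gamma>2 t", OF _ _ _ \<open>0 \<le> t\<close> \<open>t \<le> T\<close>])
  show "0 \<le> T" using L1 by (simp add: segment_lift_def)
next
  fix t assume t: "0 \<le> t" "t \<le> T" and IH: "\<And>u. 0 \<le> u \<Longrightarrow> u < t \<Longrightarrow> \<gamma>1 u = \<gamma>2 u"
  show "\<gamma>1 t = \<gamma>2 t"
  proof (cases "t = 0")
    case True
    then show ?thesis using L1 L2 by (simp add: segment_lift_def)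
  next
    case False
    have "(\<lambda>u. \<gamma>1 u - \<gamma>2 u) t \<in> {0}"
    proof (rule continuous_left_limit_in_closed[where h = "\<lambda>u. \<gamma>1 u - \<gamma>2 u"])
      have "continuous_on {0..t} \<gamma>1" "continuous_on {0..t} \<gamma>2"
        using segment_lift_restrict[OF L1, of t] segment_lift_restrict[OF L2, of t] t
        by (auto simp: segment_lift_def)
      then show "continuous_on {0..t} (\<lambda>u. \<gamma>1 u - \<gamma>2 u)" by (intro continuous_intros)
    qed (use t False IH in auto)
    then show ?thesis by simp
  qed
next
  fix t assume t: "0 \<le> t" "t < T" and IH: "\<And>u. 0 \<le> u \<Longrightarrow> u \<le> t \<Longrightarrow> \<gamma>1 u = \<gamma>2 u"
  obtain \<rho> c where "\<rho> > 0" and inv: "locally_invertible f (\<gamma>1 t) \<rho> c"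
    by (rule locally_invertible_at)
  have tT: "t \<in> {0..T}" using t by simp
  obtain \<eta>1 where \<eta>1: "\<eta>1 > 0" "\<And>u. u \<in> {0..T} \<Longrightarrow> dist u t < \<eta>1 \<Longrightarrow> dist (\<gamma>1 u) (\<gamma>1 t) < \<rho>"
    using segment_lift_near[OF L1 tT \<open>\<rho> > 0\<close>] by blast
  obtain \<eta>2 where \<eta>2: "\<eta>2 > 0" "\<And>u. u \<in> {0..T} \<Longrightarrow> dist u t < \<eta>2 \<Longrightarrow> dist (\<gamma>2 u) (\<gamma>2 t) < \<rho>"
    using segment_lift_near[OF L2 tT \<open>\<rho> > 0\<close>] by blast
  have "\<gamma>1 u = \<gamma>2 u" if u: "t < u" "u < t + min \<eta>1 \<eta>2" "u \<le> T" for u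
  proof (rule locally_invertible_inj[OF inv])
    have "u \<in> {0..T}" "dist u t < \<eta>1" "dist u t < \<eta>2" using u t by (auto simp: dist_real_def)
    then show "\<gamma>1 u \<in> cball (\<gamma>1 t) \<rho>" "\<gamma>2 u \<in> cball (\<gamma>1 t) \<rho>"
      using \<eta>1(2)[of u] \<eta>2(2)[of u] IH[of t] t by (simp_all add: dist_commute)
    show "f (\<gamma>1 u) = f (\<gamma>2 u)" using L1 L2 u t by (simp add: segment_lift_def)
  qed
  then show "\<exists>\<eta>>0. \<forall>u. t < u \<longrightarrow> u < t + \<eta> \<longrightarrow> u \<le> T \<longrightarrow> \<gamma>1 u = \<gamma>2 u"
    using \<eta>1(1) \<eta>2(1) by (intro exI[of _ "min \<eta>1 \<eta>2"]) auto
qed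

lemma inverse_deriv_approx:
  assumes "\<epsilon> > 0"
  obtains r where "r > 0"
    "\<And>y. norm (y - x) < r \<Longrightarrow> norm ((y - x) - inv_isom (f' x) (f y - f x)) \<le> \<epsilon> * norm (y - x)"
proof -
  let ?B = "inv_isom (f' x)"
  have "\<epsilon> / (norm ?B + 1) > 0" using assms by (simp add: add_nonneg_pos)
  then obtain r where r: "r > 0"
    "\<And>y. norm (y - x) < r \<Longrightarrow> norm (f y - f x - f' x (y - x)) \<le> \<epsilon> / (norm ?B + 1) * norm (y - x)"
    using deriv[of x] unfolding has_derivative_at_alt by blast
  show ?thesis
  proof (rule that[OF r(1)])
    fix y assume y: "norm (y - x) < r"
    have "(y - x) - ?B (f y - f x) = - ?B (f y - f x - f' x (y - x))"
      using isom by (simp add: blinfun.diff_right)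
    then have "norm ((y - x) - ?B (f y - f x)) \<le> norm ?B * norm (f y - f x - f' x (y - x))"
      by (metis norm_blinfun norm_minus_cancel)
    also have "\<dots> \<le> (norm ?B + 1) * (\<epsilon> / (norm ?B + 1) * norm (y - x))"
      using r(2)[OF y] by (intro mult_mono) auto
    also have "\<dots> = \<epsilon> * norm (y - x)"
      using add_nonneg_pos[OF norm_ge_zero[of ?B] zero_less_one] by simp
    finally show "norm ((y - x) - ?B (f y - f x)) \<le> \<epsilon> * norm (y - x)" .
  qed
qed

lemma segment_lift_right_deriv:
  assumes L: "segment_lift x0 d T \<gamma>" and t: "0 \<le> t" "t < T" and "\<epsilon> > 0"
  obtains \<eta> where "\<eta> > 0" "\<And>s. 0 < s \<Longrightarrow> s < \<eta> \<Longrightarrow> t + s \<le> T \<Longrightarrow>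
      norm (\<gamma> (t + s) - \<gamma> t - s *\<^sub>R inv_isom (f' (\<gamma> t)) d) \<le> \<epsilon> * s"
proof -
  obtain \<rho> c where \<rho>: "\<rho> > 0" "c > 0" and inv: "locally_invertible f (\<gamma> t) \<rho> c"
    by (rule locally_invertible_at)
  have pos: "c * norm d + 1 > 0" using \<rho>(2) by (simp add: add_nonneg_pos)
  define \<epsilon>' where "\<epsilon>' = \<epsilon> / (c * norm d + 1)"
  have "\<epsilon>' > 0" using \<open>\<epsilon> > 0\<close> pos by (simp add: \<epsilon>'_def)
  obtain r where "r > 0" and approx: "\<And>y. norm (y - \<gamma> t) < r \<Longrightarrow>
      norm ((y - \<gamma> t) - inv_isom (f' (\<gamma> t)) (f y - f (\<gamma> t))) \<le> \<epsilon>' * norm (y - \<gamma> t)"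
    using inverse_deriv_approx[OF \<open>\<epsilon>' > 0\<close>, where x = "\<gamma> t"] by blast
  obtain \<eta> where "\<eta> > 0" and \<eta>: "\<And>u. u \<in> {0..T} \<Longrightarrow> dist u t < \<eta> \<Longrightarrow> dist (\<gamma> u) (\<gamma> t) < min \<rho> r"
    by (rule segment_lift_near[OF L _ , of t "min \<rho> r"]) (use t \<rho> \<open>r > 0\<close> in auto)
  show ?thesis
  proof (rule that[OF \<open>\<eta> > 0\<close>])
    fix s assume s: "0 < s" "s < \<eta>" "t + s \<le> T"
    let ?y = "\<gamma> (t + s)"
    have close: "norm (?y - \<gamma> t) < \<rho>" "norm (?y - \<gamma> t) < r"
      using \<eta>[of "t + s"] s t by (auto simp: dist_norm)
    have fy: "f ?y - f (\<gamma> t) = s *\<^sub>R d"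
      using L s t by (auto simp: segment_lift_def algebra_simps)
    have "norm (?y - \<gamma> t) \<le> c * norm (f ?y - f (\<gamma> t))"
      using close(1) \<rho>(1) by (intro locally_invertible_lipschitz[OF inv]) (auto simp: dist_norm norm_minus_commute)
    then have ny: "norm (?y - \<gamma> t) \<le> c * norm d * s" using fy s by (simp add: mult_ac)
    have "norm (?y - \<gamma> t - s *\<^sub>R inv_isom (f' (\<gamma> t)) d) \<le> \<epsilon>' * norm (?y - \<gamma> t)"
      using approx[OF close(2)] by (simp add: fy blinfun.scaleR_right)
    also have "\<dots> \<le> \<epsilon>' * ((c * norm d + 1) * s)"
      using ny s \<open>\<epsilon>' > 0\<close> by (intro mult_left_mono) (auto simp: algebra_simps)
    also have "\<dots> = \<epsilon> * s" using pos by (simp add: \<epsilon>'_def)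
    finally show "norm (?y - \<gamma> t - s *\<^sub>R inv_isom (f' (\<gamma> t)) d) \<le> \<epsilon> * s" .
  qed
qed

lemma segment_lift_lipschitz:
  assumes L: "segment_lift x0 d T \<gamma>" and "0 \<le> V"
    and speed: "\<And>t. t \<in> {0..T} \<Longrightarrow> norm (inv_isom (f' (\<gamma> t)) d) \<le> V"
  shows "V-lipschitz_on {0..T} \<gamma>"
proof (rule lipschitz_on_leI)
  fix t1 t2 assume t12: "t1 \<in> {0..T}" "t2 \<in> {0..T}" "t1 \<le> t2"
  define \<phi> where "\<phi> s = norm (\<gamma> (t1 + s) - \<gamma> t1)" for s
  have "\<phi> (t2 - t1) \<le> \<phi> 0 + V * (t2 - t1)"
  proof (rule bound_from_right_increments)
    have "continuous_on {0..t2 - t1} (\<lambda>s. \<gamma> (t1 + s))"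
      by (rule continuous_on_compose2[of "{0..T}" \<gamma>])
        (use L t12 in \<open>auto simp: segment_lift_def intro!: continuous_intros\<close>)
    then show "continuous_on {0..t2 - t1} \<phi>" unfolding \<phi>_def by (intro continuous_intros)
  next
    fix s \<epsilon> :: real assume s: "0 \<le> s" "s < t2 - t1" and "\<epsilon> > 0"
    let ?t = "t1 + s"
    have t: "0 \<le> ?t" "?t < T" using s t12 by auto
    obtain \<eta> where "\<eta> > 0" and \<eta>: "\<And>h. 0 < h \<Longrightarrow> h < \<eta> \<Longrightarrow> ?t + h \<le> T \<Longrightarrow>
        norm (\<gamma> (?t + h) - \<gamma> ?t - h *\<^sub>R inv_isom (f' (\<gamma> ?t)) d) \<le> \<epsilon> * h"
      using segment_lift_right_deriv[OF L t \<open>\<epsilon> > 0\<close>] by blast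
    have "\<phi> (s + h) \<le> \<phi> s + (V + \<epsilon>) * h" if h: "0 < h" "h < \<eta>" "s + h \<le> t2 - t1" for h
    proof -
      let ?v = "h *\<^sub>R inv_isom (f' (\<gamma> ?t)) d"
      have "norm (\<gamma> (?t + h) - \<gamma> ?t) \<le> norm (\<gamma> (?t + h) - \<gamma> ?t - ?v) + norm ?v"
        using norm_triangle_ineq[of "\<gamma> (?t + h) - \<gamma> ?t - ?v" ?v] by simp
      also have "\<dots> \<le> \<epsilon> * h + h * V"
      proof (rule add_mono)
        show "norm (\<gamma> (?t + h) - \<gamma> ?t - ?v) \<le> \<epsilon> * h" using \<eta> h t12 by simp
        show "norm ?v \<le> h * V" using speed[of ?t] t h by (simp add: mult_left_mono)
      qed
      finally have "norm (\<gamma> (?t + h) - \<gamma> ?t) \<le> (V + \<epsilon>) * h" by (simp add: algebra_simps)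
      moreover have "\<phi> (s + h) \<le> norm (\<gamma> (?t + h) - \<gamma> ?t) + \<phi> s"
        unfolding \<phi>_def using norm_triangle_ineq[of "\<gamma> (?t + h) - \<gamma> ?t" "\<gamma> ?t - \<gamma> t1"]
        by (simp add: add.assoc)
      ultimately show ?thesis by simp
    qed
    then show "\<exists>\<eta>>0. \<forall>h. 0 < h \<longrightarrow> h < \<eta> \<longrightarrow> s + h \<le> t2 - t1 \<longrightarrow> \<phi> (s + h) \<le> \<phi> s + (V + \<epsilon>) * h"
      using \<open>\<eta> > 0\<close> by blast
  qed (use t12 in auto)
  then show "dist (\<gamma> t1) (\<gamma> t2) \<le> V * dist t1 t2"
    using t12 by (simp add: \<phi>_def dist_norm dist_real_def norm_minus_commute)
qed (rule \<open>0 \<le> V\<close>)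

text \<open>Near \<open>\<gamma> T\<close> the local inverse of \<open>f\<close> continues the lift a little beyond \<open>T\<close>.\<close>
lemma segment_lift_extend:
  assumes L: "segment_lift x0 d T \<gamma>"
  obtains \<eta> where "\<eta> > 0" "\<And>T'. T < T' \<Longrightarrow> T' < T + \<eta> \<Longrightarrow> \<exists>\<gamma>'. segment_lift x0 d T' \<gamma>'"
proof -
  obtain \<rho> c where \<rho>: "\<rho> > 0" "c > 0" and inv: "locally_invertible f (\<gamma> T) \<rho> c"
    by (rule locally_invertible_at)
  have T0: "0 \<le> T" and fT: "f (\<gamma> T) = f x0 + T *\<^sub>R d" using L by (auto simp: segment_lift_def)
  have pos: "norm d + 1 > 0" by (simp add: add_nonneg_pos)
  define \<eta> where "\<eta> = \<rho> / (c * (norm d + 1))"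
  have "\<eta> > 0" using \<rho> pos by (simp add: \<eta>_def)
  have target: "norm (f x0 + u *\<^sub>R d - f (\<gamma> T)) < \<rho> / c" if u: "u \<in> {T..<T + \<eta>}" for u
  proof -
    have "norm (f x0 + u *\<^sub>R d - f (\<gamma> T)) = (u - T) * norm d"
      using u by (simp add: fT algebra_simps flip: scaleR_diff_left)
    also have "\<dots> \<le> \<eta> * norm d" using u by (intro mult_right_mono) auto
    also have "\<dots> = \<rho> / c * (norm d / (norm d + 1))" using \<rho> by (simp add: \<eta>_def)
    also have "\<dots> < \<rho> / c * 1" using \<rho> pos by (intro mult_strict_left_mono) auto
    finally show ?thesis by simp
  qed
  obtain \<phi> where \<phi>: "\<And>u. u \<in> {T..<T + \<eta>} \<Longrightarrow> \<phi> u \<in> cball (\<gamma> T) \<rho>"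
    "\<And>u. u \<in> {T..<T + \<eta>} \<Longrightarrow> f (\<phi> u) = f x0 + u *\<^sub>R d"
    using locally_invertible_choice[of "{T..<T + \<eta>}" f "\<lambda>_. \<gamma> T" \<rho> c "\<lambda>u. f x0 + u *\<^sub>R d"] inv target
    by blast
  have "(c * norm d)-lipschitz_on {T..<T + \<eta>} \<phi>"
  proof (rule lipschitz_onI)
    fix u v assume uv: "u \<in> {T..<T + \<eta>}" "v \<in> {T..<T + \<eta>}"
    have "norm (\<phi> u - \<phi> v) \<le> c * norm (f (\<phi> u) - f (\<phi> v))"
      using uv \<phi>(1) by (intro locally_invertible_lipschitz[OF inv]) auto
    also have "f (\<phi> u) - f (\<phi> v) = (u - v) *\<^sub>R d" using uv by (simp add: \<phi> algebra_simps)
    finally show "dist (\<phi> u) (\<phi> v) \<le> c * norm d * dist u v" by (simp add: dist_norm dist_real_def mult_ac)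
  qed (use \<rho> in simp)
  then have cont_\<phi>: "continuous_on {T..<T + \<eta>} \<phi>" by (rule lipschitz_on_continuous_on)
  have "\<phi> T = \<gamma> T"
    using \<phi>[of T] \<open>\<eta> > 0\<close> \<rho>(1) fT by (intro locally_invertible_inj[OF inv]) auto
  show ?thesis
  proof (rule that[OF \<open>\<eta> > 0\<close>])
    fix T' assume T': "T < T'" "T' < T + \<eta>"
    have "continuous_on {0..T'} (\<lambda>u. if u \<le> T then \<gamma> u else \<phi> u)"
    proof (rule continuous_on_cases_le)
      show "continuous_on {u \<in> {0..T'}. u \<le> T} \<gamma>"
        by (rule continuous_on_subset[of "{0..T}"]) (use L in \<open>auto simp: segment_lift_def\<close>)
      show "continuous_on {u \<in> {0..T'}. T \<le> u} \<phi>"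
        by (rule continuous_on_subset[OF cont_\<phi>]) (use T' in auto)
    qed (auto simp: \<open>\<phi> T = \<gamma> T\<close> intro: continuous_on_id)
    then show "\<exists>\<gamma>'. segment_lift x0 d T' \<gamma>'"
      using L T' \<phi>(2) by (intro exI[of _ "\<lambda>u. if u \<le> T then \<gamma> u else \<phi> u"]) (auto simp: segment_lift_def)
  qed
qed

text \<open>By uniqueness, lifts over different intervals agree where both are defined.\<close>
lemma segment_lifts_glue:
  assumes lifts: "\<And>T. 0 \<le> T \<Longrightarrow> T < t \<Longrightarrow> \<exists>\<gamma>. segment_lift x0 d T \<gamma>"
  obtains G where "\<And>T. 0 \<le> T \<Longrightarrow> T < t \<Longrightarrow> segment_lift x0 d T G"
proof -
  define G where "G u = (SOME \<gamma>. segment_lift x0 d ((u + t) / 2) \<gamma>) u" for u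
  have G_eq: "G u = \<gamma> u" if L: "segment_lift x0 d T \<gamma>" and u: "T < t" "0 \<le> u" "u \<le> T" for T \<gamma> u
  proof -
    define \<gamma>' where "\<gamma>' = (SOME \<gamma>. segment_lift x0 d ((u + t) / 2) \<gamma>)"
    have "\<exists>\<gamma>. segment_lift x0 d ((u + t) / 2) \<gamma>" using lifts[of "(u + t) / 2"] u by auto
    then have L': "segment_lift x0 d ((u + t) / 2) \<gamma>'" unfolding \<gamma>'_def by (rule someI_ex)
    define m where "m = min T ((u + t) / 2)"
    have m: "0 \<le> m" "m \<le> T" "m \<le> (u + t) / 2" "u \<le> m" using u by (auto simp: m_def min_def)
    have "\<gamma>' u = \<gamma> u"
      using segment_lift_unique[OF segment_lift_restrict[OF L' m(1,3)] segment_lift_restrict[OF L m(1,2)]] u m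
      by blast
    then show ?thesis by (simp add: G_def \<gamma>'_def)
  qed
  have G_lift: "segment_lift x0 d T G" if T: "0 \<le> T" "T < t" for T
  proof -
    obtain \<gamma> where L: "segment_lift x0 d T \<gamma>" using lifts[OF T] by blast
    have eq: "\<And>u. u \<in> {0..T} \<Longrightarrow> G u = \<gamma> u" using G_eq[OF L T(2)] by auto
    have "continuous_on {0..T} \<gamma>" using L by (simp add: segment_lift_def)
    then have "continuous_on {0..T} G" by (rule continuous_on_eq) (simp add: eq)
    then show ?thesis using L G_eq[OF L T(2)] by (auto simp: segment_lift_def)
  qed
  then show ?thesis by (rule that)
qed

text \<open>A uniform Lipschitz bound lets the glued lifts over \<open>[0, T]\<close>, \<open>T < t\<close>, extend
  continuously to \<open>[0, t]\<close>.\<close>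
lemma segment_lift_limit:
  assumes "0 < t"
    and lifts: "\<And>T. 0 \<le> T \<Longrightarrow> T < t \<Longrightarrow> \<exists>\<gamma>. segment_lift x0 d T \<gamma>"
    and lip: "\<And>T \<gamma>. segment_lift x0 d T \<gamma> \<Longrightarrow> T < t \<Longrightarrow> \<Lambda>-lipschitz_on {0..T} \<gamma>"
  shows "\<exists>\<gamma>. segment_lift x0 d t \<gamma>"
proof -
  obtain G where G_lift: "\<And>T. 0 \<le> T \<Longrightarrow> T < t \<Longrightarrow> segment_lift x0 d T G"
    using segment_lifts_glue[OF lifts] by blast
  have "\<Lambda>-lipschitz_on {0..<t} G"
  proof (rule lipschitz_onI)
    fix u v assume uv: "u \<in> {0..<t}" "v \<in> {0..<t}"
    then have "segment_lift x0 d (max u v) G" by (intro G_lift) auto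
    then have "\<Lambda>-lipschitz_on {0..max u v} G" by (rule lip) (use uv in auto)
    then show "dist (G u) (G v) \<le> \<Lambda> * dist u v" using uv by (simp add: lipschitz_onD)
  next
    have "segment_lift x0 d 0 G" using \<open>0 < t\<close> by (intro G_lift) auto
    then have "\<Lambda>-lipschitz_on {0..0} G" by (rule lip) (use \<open>0 < t\<close> in auto)
    then show "0 \<le> \<Lambda>" by (rule lipschitz_on_nonneg)
  qed
  then obtain g where g: "\<Lambda>-lipschitz_on (closure {0..<t}) g" "\<forall>u\<in>{0..<t}. g u = G u"
    using lipschitz_extend_closure by metis
  have cont: "continuous_on {0..t} g"
    using lipschitz_on_continuous_on[OF g(1)] \<open>0 < t\<close> by simp
  have on: "f (g u) = f x0 + u *\<^sub>R d" if "0 \<le> u" "u < t" for u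
    using G_lift[of u] g(2) that by (auto simp: segment_lift_def)
  have "(\<lambda>u. f (g u) - (f x0 + u *\<^sub>R d)) t \<in> {0}"
  proof (rule continuous_left_limit_in_closed[where h = "\<lambda>u. f (g u) - (f x0 + u *\<^sub>R d)"])
    show "continuous_on {0..t} (\<lambda>u. f (g u) - (f x0 + u *\<^sub>R d))"
      by (intro continuous_intros continuous_on_compose2[OF continuous_f cont]) auto
  qed (use \<open>0 < t\<close> on in auto)
  then have at_t: "f (g t) = f x0 + t *\<^sub>R d" by simp
  have "segment_lift x0 d t g" unfolding segment_lift_def
  proof (intro conjI ballI)
    show "g 0 = x0" using G_lift[of 0] g(2) \<open>0 < t\<close> by (simp add: segment_lift_def)
    fix u assume "u \<in> {0..t}"
    then show "f (g u) = f x0 + u *\<^sub>R d" using on at_t by (cases "u = t") auto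
  qed (use cont \<open>0 < t\<close> in auto)
  then show ?thesis by blast
qed

text \<open>Lifts depend Lipschitz-continuously on the direction: the lift for a nearby
  direction is found pointwise by the local inverses along the compact trace of \<open>\<gamma>0\<close>.\<close>
lemma segment_lift_perturb:
  assumes L0: "segment_lift x0 d0 1 \<gamma>0"
  obtains \<delta> c where "\<delta> > 0" "c > 0"
    "\<And>d. norm (d - d0) < \<delta> \<Longrightarrow> \<exists>\<gamma>. segment_lift x0 d 1 \<gamma> \<and> norm (\<gamma> 1 - \<gamma>0 1) \<le> c * norm (d - d0)"
proof -
  have cont0: "continuous_on {0..1} \<gamma>0" and f0: "\<And>u. u \<in> {0..1} \<Longrightarrow> f (\<gamma>0 u) = f x0 + u *\<^sub>R d0"
    and "\<gamma>0 0 = x0"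
    using L0 by (auto simp: segment_lift_def)
  obtain \<rho> c where \<rho>: "\<rho> > 0" "c > 0"
    and inv_trace: "\<forall>q\<in>\<gamma>0 ` {0..1}. locally_invertible f q \<rho> c"
    by (rule uniformly_locally_invertible[OF compact_continuous_image[OF cont0 compact_Icc]])
  have inv: "locally_invertible f (\<gamma>0 u) \<rho> c" if "u \<in> {0..1}" for u
    using inv_trace that by blast
  show ?thesis
  proof (rule that[of "\<rho> / (2 * c)" c])
    fix d assume d: "norm (d - d0) < \<rho> / (2 * c)"
    have "norm (d - d0) * (2 * c) < \<rho>" using d \<rho> by (simp add: pos_less_divide_eq)
    then have small: "c * norm (d - d0) < \<rho> / 2" by (simp add: algebra_simps)
    have shrink: "norm (u *\<^sub>R (d - d0)) \<le> norm (d - d0)" if "u \<in> {0..1}" for u :: real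
      using mult_left_le_one_le[of "norm (d - d0)" u] that by simp
    have shift: "f x0 + u *\<^sub>R d - f (\<gamma>0 u) = u *\<^sub>R (d - d0)" if "u \<in> {0..1}" for u
      using f0[OF that] by (simp add: algebra_simps)
    have target: "norm (f x0 + u *\<^sub>R d - f (\<gamma>0 u)) < \<rho> / c" if u: "u \<in> {0..1}" for u
    proof -
      have "norm (u *\<^sub>R (d - d0)) < \<rho> / (2 * c)" using shrink[OF u] d by linarith
      also have "\<dots> \<le> \<rho> / c" using \<rho> by (simp add: frac_le)
      finally show ?thesis by (simp add: shift[OF u])
    qed
    obtain \<gamma> where \<gamma>: "\<And>u. u \<in> {0..1} \<Longrightarrow> \<gamma> u \<in> cball (\<gamma>0 u) \<rho>"
      "\<And>u. u \<in> {0..1} \<Longrightarrow> f (\<gamma> u) = f x0 + u *\<^sub>R d"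
      using locally_invertible_choice[of "{0..1}" f \<gamma>0 \<rho> c "\<lambda>u. f x0 + u *\<^sub>R d"] inv target by blast
    have close: "norm (\<gamma> u - \<gamma>0 u) \<le> c * norm (d - d0)" if u: "u \<in> {0..1}" for u
    proof -
      have "norm (\<gamma> u - \<gamma>0 u) \<le> c * norm (f (\<gamma> u) - f (\<gamma>0 u))"
        using \<gamma>(1)[OF u] \<rho>(1) by (intro locally_invertible_lipschitz[OF inv[OF u]]) auto
      also have "\<dots> = c * norm (u *\<^sub>R (d - d0))" using \<gamma>(2)[OF u] shift[OF u] by simp
      also have "\<dots> \<le> c * norm (d - d0)"
        using shrink[OF u] \<rho>(2) by (intro mult_left_mono) auto
      finally show ?thesis .
    qed
    have "continuous_on {0..1} \<gamma>"
    proof (rule continuous_on_near_centres[OF cont0 \<rho>(2) inv])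
      show "dist (\<gamma> u) (\<gamma>0 u) < \<rho> / 2" if "u \<in> {0..1}" for u
        using close[OF that] small by (simp add: dist_norm)
      show "(norm d)-lipschitz_on {0..1} (\<lambda>u. f (\<gamma> u))"
      proof (rule lipschitz_onI)
        fix u v :: real assume "u \<in> {0..1}" "v \<in> {0..1}"
        then have "f (\<gamma> u) - f (\<gamma> v) = (u - v) *\<^sub>R d" by (simp add: \<gamma>(2) algebra_simps)
        then show "dist (f (\<gamma> u)) (f (\<gamma> v)) \<le> norm d * dist u v"
          by (simp add: dist_norm dist_real_def mult.commute)
      qed simp
    qed
    moreover have "\<gamma> 0 = x0"
      using \<gamma>[of 0] \<rho>(1) \<open>\<gamma>0 0 = x0\<close> by (intro locally_invertible_inj[OF inv[of 0]]) auto
    ultimately have "segment_lift x0 d 1 \<gamma>" using \<gamma>(2) by (simp add: segment_lift_def)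
    then show "\<exists>\<gamma>. segment_lift x0 d 1 \<gamma> \<and> norm (\<gamma> 1 - \<gamma>0 1) \<le> c * norm (d - d0)"
      using close[of 1] by auto
  qed (use \<rho> in auto)
qed

end

section \<open>Global inversion\<close>

locale coercive_lyapunov = local_diffeo f f' for f :: "'a::banach \<Rightarrow> 'b::banach" and f' +
  fixes k :: "'a \<Rightarrow> real" and M :: real
  assumes inv_bdd: "\<And>r. 0 < r \<Longrightarrow> bdd_above ((\<lambda>x. norm (inv_isom (f' x))) ` cball 0 r)"
    and k_lip: "locally_lipschitz k"
    and k_coercive: "coercive k"
    and k_dir: "\<And>x v. \<exists>D. has_right_dir_deriv k x v D"
    and M_nonneg: "0 \<le> M"
    and k_dir_bound: "\<And>x d. right_dir_deriv k x (inv_isom (f' x) d) \<le> M * norm d"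
begin

lemma segment_lift_k_bound:
  assumes L: "segment_lift x0 d T \<gamma>" and t: "0 \<le> t" "t \<le> T"
  shows "k (\<gamma> t) \<le> k x0 + M * norm d * t"
proof -
  have "(k \<circ> \<gamma>) t \<le> (k \<circ> \<gamma>) 0 + M * norm d * t"
  proof (rule bound_from_right_increments[OF _ _ _ t])
    show "0 \<le> T" using L by (simp add: segment_lift_def)
    have "continuous_on UNIV k" using k_coercive by (simp add: coercive_def)
    moreover have "continuous_on {0..T} \<gamma>" using L by (simp add: segment_lift_def)
    ultimately show "continuous_on {0..T} (k \<circ> \<gamma>)"
      using continuous_on_compose continuous_on_subset subset_UNIV by metis
  next
    fix t \<epsilon> :: real assume t: "0 \<le> t" "t < T" and "\<epsilon> > 0"
    obtain D where D: "has_right_dir_deriv k (\<gamma> t) (inv_isom (f' (\<gamma> t)) d) D" using k_dir by blast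
    have "D \<le> M * norm d" using k_dir_bound[of "\<gamma> t" d] right_dir_deriv_eqI[OF D] by simp
    have "\<exists>\<eta>>0. \<forall>s. 0 < s \<longrightarrow> s < \<eta> \<longrightarrow> t + s \<le> T \<longrightarrow> k (\<gamma> (t + s)) \<le> k (\<gamma> t) + (D + \<epsilon>) * s"
    proof (rule right_increment_along_tangent[OF k_lip D \<open>\<epsilon> > 0\<close>])
      fix \<epsilon>' :: real assume "\<epsilon>' > 0"
      then obtain \<eta> where "\<eta> > 0" "\<And>s. 0 < s \<Longrightarrow> s < \<eta> \<Longrightarrow> t + s \<le> T \<Longrightarrow>
          norm (\<gamma> (t + s) - \<gamma> t - s *\<^sub>R inv_isom (f' (\<gamma> t)) d) \<le> \<epsilon>' * s"
        by (rule segment_lift_right_deriv[OF L t]) blast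
      then show "\<exists>\<eta>>0. \<forall>s. 0 < s \<longrightarrow> s < \<eta> \<longrightarrow> t + s \<le> T \<longrightarrow>
          norm (\<gamma> (t + s) - \<gamma> t - s *\<^sub>R inv_isom (f' (\<gamma> t)) d) \<le> \<epsilon>' * s" by blast
    qed
    then obtain \<eta> where "\<eta> > 0"
      and incr: "\<And>s. 0 < s \<Longrightarrow> s < \<eta> \<Longrightarrow> t + s \<le> T \<Longrightarrow> k (\<gamma> (t + s)) \<le> k (\<gamma> t) + (D + \<epsilon>) * s"
      by blast
    have "(k \<circ> \<gamma>) (t + s) \<le> (k \<circ> \<gamma>) t + (M * norm d + \<epsilon>) * s"
      if "0 < s" "s < \<eta>" "t + s \<le> T" for s
    proof -
      have "(D + \<epsilon>) * s \<le> (M * norm d + \<epsilon>) * s"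
        using that \<open>D \<le> M * norm d\<close> by (intro mult_right_mono) auto
      then show ?thesis using incr[OF that] by simp
    qed
    then show "\<exists>\<eta>>0. \<forall>s. 0 < s \<longrightarrow> s < \<eta> \<longrightarrow> t + s \<le> T \<longrightarrow>
        (k \<circ> \<gamma>) (t + s) \<le> (k \<circ> \<gamma>) t + (M * norm d + \<epsilon>) * s"
      using \<open>\<eta> > 0\<close> by blast
  qed
  then show ?thesis using L by (simp add: segment_lift_def)
qed

text \<open>All lifts over parameter intervals \<open>[0, T] \<subseteq> [0, 1]\<close> stay in the sublevel set
  \<open>{k \<le> k x0 + M \<parallel>d\<parallel>}\<close>, which coercivity makes bounded; there \<open>f'\<^sup>-\<^sup>1\<close> is bounded by
  hypothesis.\<close>
lemma segment_lift_speed_bound: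
  obtains V where "0 \<le> V"
    "\<And>T \<gamma> t. segment_lift x0 d T \<gamma> \<Longrightarrow> T \<le> 1 \<Longrightarrow> t \<in> {0..T} \<Longrightarrow> norm (inv_isom (f' (\<gamma> t)) d) \<le> V"
proof -
  obtain R where "R > 0" and R: "\<And>x. k x \<le> k x0 + M * norm d \<Longrightarrow> norm x \<le> R"
    using coercive_sublevel_bounded[OF k_coercive, of "k x0 + M * norm d"] by blast
  obtain C where C: "\<And>x. x \<in> cball 0 R \<Longrightarrow> norm (inv_isom (f' x)) \<le> C"
    using inv_bdd[OF \<open>R > 0\<close>] unfolding bdd_above_def by blast
  have "norm (inv_isom (f' (\<gamma> t)) d) \<le> max C 0 * norm d"
    if L: "segment_lift x0 d T \<gamma>" "T \<le> 1" and t: "t \<in> {0..T}" for T \<gamma> t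
  proof -
    have "k (\<gamma> t) \<le> k x0 + M * norm d * t" using segment_lift_k_bound[OF L(1)] t by simp
    also have "\<dots> \<le> k x0 + M * norm d" using M_nonneg t L(2) by (simp add: mult_left_le)
    finally have "norm (\<gamma> t) \<le> R" by (rule R)
    then have "norm (inv_isom (f' (\<gamma> t))) \<le> max C 0" using C[of "\<gamma> t"] by simp
    then show ?thesis by (intro order_trans[OF norm_blinfun] mult_right_mono) auto
  qed
  then show ?thesis using that[of "max C 0 * norm d"] by simp
qed

lemma segment_lift_exists: "\<exists>\<gamma>. segment_lift x0 d 1 \<gamma>"
proof (rule real_continuation_induct[where P = "\<lambda>t. \<exists>\<gamma>. segment_lift x0 d t \<gamma>"])
  obtain V where "0 \<le> V" and speed:
      "\<And>T \<gamma> t. segment_lift x0 d T \<gamma> \<Longrightarrow> T \<le> 1 \<Longrightarrow> t \<in> {0..T} \<Longrightarrow> norm (inv_isom (f' (\<gamma> t)) d) \<le> V"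
    using segment_lift_speed_bound[of x0 d] by blast
  fix t :: real assume t: "0 \<le> t" "t \<le> 1" and IH: "\<And>u. 0 \<le> u \<Longrightarrow> u < t \<Longrightarrow> \<exists>\<gamma>. segment_lift x0 d u \<gamma>"
  show "\<exists>\<gamma>. segment_lift x0 d t \<gamma>"
  proof (cases "t = 0")
    case True
    then show ?thesis using segment_lift_zero by blast
  next
    case False
    show ?thesis
    proof (rule segment_lift_limit)
      show "0 < t" using t False by simp
      show "\<exists>\<gamma>. segment_lift x0 d T \<gamma>" if "0 \<le> T" "T < t" for T using IH that .
      show "V-lipschitz_on {0..T} \<gamma>" if L: "segment_lift x0 d T \<gamma>" "T < t" for T \<gamma>
      proof (rule segment_lift_lipschitz[OF L(1) \<open>0 \<le> V\<close>])
        show "norm (inv_isom (f' (\<gamma> u)) d) \<le> V" if "u \<in> {0..T}" for u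
          using speed[OF L(1) _ that] L(2) t by simp
      qed
    qed
  qed
next
  fix t :: real assume "0 \<le> t" "t < 1" and IH: "\<And>u. 0 \<le> u \<Longrightarrow> u \<le> t \<Longrightarrow> \<exists>\<gamma>. segment_lift x0 d u \<gamma>"
  then obtain \<gamma> where "segment_lift x0 d t \<gamma>" by blast
  then obtain \<eta> where "\<eta> > 0" "\<And>T'. t < T' \<Longrightarrow> T' < t + \<eta> \<Longrightarrow> \<exists>\<gamma>'. segment_lift x0 d T' \<gamma>'"
    by (rule segment_lift_extend) blast
  then show "\<exists>\<eta>>0. \<forall>u. t < u \<longrightarrow> u < t + \<eta> \<longrightarrow> u \<le> 1 \<longrightarrow> (\<exists>\<gamma>. segment_lift x0 d u \<gamma>)" by blast
qed auto

definition f_inv :: "'b \<Rightarrow> 'a" where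
  "f_inv z = (SOME \<gamma>. segment_lift 0 (z - f 0) 1 \<gamma>) 1"

lemma f_inv_eq: "segment_lift 0 (z - f 0) 1 \<gamma> \<Longrightarrow> f_inv z = \<gamma> 1"
proof -
  assume L: "segment_lift 0 (z - f 0) 1 \<gamma>"
  have "segment_lift 0 (z - f 0) 1 (SOME \<gamma>. segment_lift 0 (z - f 0) 1 \<gamma>)"
    using segment_lift_exists by (rule someI_ex)
  then show ?thesis unfolding f_inv_def using L by (intro segment_lift_unique) auto
qed

lemma f_f_inv: "f (f_inv z) = z"
proof -
  obtain \<gamma> where L: "segment_lift 0 (z - f 0) 1 \<gamma>" using segment_lift_exists by blast
  then show ?thesis by (simp add: f_inv_eq segment_lift_def)
qed

lemma f_inv_lipschitz_near:
  obtains \<delta> c where "\<delta> > 0" "\<And>z. norm (z - z0) < \<delta> \<Longrightarrow> norm (f_inv z - f_inv z0) \<le> c * norm (z - z0)"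
proof -
  obtain \<gamma>0 where L0: "segment_lift 0 (z0 - f 0) 1 \<gamma>0" using segment_lift_exists by blast
  obtain \<delta> c where "\<delta> > 0" and near: "\<And>d. norm (d - (z0 - f 0)) < \<delta> \<Longrightarrow>
      \<exists>\<gamma>. segment_lift 0 d 1 \<gamma> \<and> norm (\<gamma> 1 - \<gamma>0 1) \<le> c * norm (d - (z0 - f 0))"
    using segment_lift_perturb[OF L0] by blast
  have "norm (f_inv z - f_inv z0) \<le> c * norm (z - z0)" if "norm (z - z0) < \<delta>" for z
    using near[of "z - f 0"] that L0 by (auto simp: f_inv_eq)
  with \<open>\<delta> > 0\<close> show ?thesis using that by blast
qed

lemma continuous_on_f_inv: "continuous_on UNIV f_inv"
  unfolding continuous_on_iff
proof (intro ballI allI impI)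
  fix z0 :: 'b and e :: real assume "0 < e"
  obtain \<delta> c where "\<delta> > 0" and lip: "\<And>z. norm (z - z0) < \<delta> \<Longrightarrow> norm (f_inv z - f_inv z0) \<le> c * norm (z - z0)"
    by (rule f_inv_lipschitz_near) blast
  define c' where "c' = max c 0 + 1"
  have "c' > 0" by (simp add: c'_def add_nonneg_pos)
  have "dist (f_inv z) (f_inv z0) < e" if "dist z z0 < min \<delta> (e / c')" for z
  proof -
    have z: "norm (z - z0) < \<delta>" "norm (z - z0) < e / c'" using that by (auto simp: dist_norm)
    have "norm (f_inv z - f_inv z0) \<le> c' * norm (z - z0)"
      using lip[OF z(1)] by (rule order_trans) (simp add: c'_def mult_right_mono)
    also have "\<dots> < c' * (e / c')" using z(2) \<open>c' > 0\<close> by (intro mult_strict_left_mono)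
    also have "\<dots> = e" using \<open>c' > 0\<close> by simp
    finally show ?thesis by (simp add: dist_norm)
  qed
  then show "\<exists>d>0. \<forall>z\<in>UNIV. dist z z0 < d \<longrightarrow> dist (f_inv z) (f_inv z0) < e"
    using \<open>\<delta> > 0\<close> \<open>0 < e\<close> \<open>c' > 0\<close> by (intro exI[of _ "min \<delta> (e / c')"]) auto
qed

text \<open>The set of points recovered by \<open>f_inv \<circ> f\<close> is closed by continuity, open by local
  injectivity of \<open>f\<close>, and contains \<open>0\<close>; the domain being connected, it is everything.\<close>
lemma f_inv_f: "f_inv (f x) = x"
proof -
  define S where "S = {x. f_inv (f x) = x}"
  have cont: "continuous_on UNIV (\<lambda>x. f_inv (f x))"
    by (rule continuous_on_compose2[OF continuous_on_f_inv continuous_f]) auto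
  have "closed S" unfolding S_def by (rule closed_Collect_eq[OF cont continuous_on_id])
  moreover have "open S" unfolding open_dist
  proof (intro ballI)
    fix w assume "w \<in> S"
    obtain \<rho> c where "\<rho> > 0" and inv: "locally_invertible f w \<rho> c" by (rule locally_invertible_at)
    then obtain \<delta> where "\<delta> > 0" and \<delta>: "\<And>w'. dist w' w < \<delta> \<Longrightarrow> dist (f_inv (f w')) (f_inv (f w)) < \<rho>"
      using cont unfolding continuous_on_iff by blast
    have "w' \<in> S" if "dist w' w < min \<delta> \<rho>" for w'
    proof -
      have "f_inv (f w') \<in> cball w \<rho>" "w' \<in> cball w \<rho>"
        using \<delta>[of w'] that \<open>w \<in> S\<close> by (auto simp: S_def dist_commute)
      then have "f_inv (f w') = w'" by (rule locally_invertible_inj[OF inv]) (simp add: f_f_inv)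
      then show ?thesis by (simp add: S_def)
    qed
    then show "\<exists>e>0. \<forall>w'. dist w' w < e \<longrightarrow> w' \<in> S"
      using \<open>\<delta> > 0\<close> \<open>\<rho> > 0\<close> by (intro exI[of _ "min \<delta> \<rho>"]) auto
  qed
  moreover have "segment_lift 0 (f 0 - f 0) 1 (\<lambda>_. 0)" by (simp add: segment_lift_def)
  then have "0 \<in> S" by (simp add: S_def f_inv_eq)
  ultimately have "S = UNIV" using clopen[of S] by blast
  then show ?thesis by (auto simp: S_def)
qed

lemma global_diffeo: "global_diffeo f"
  unfolding global_diffeo_def
proof (intro exI conjI allI)
  show "bij f" using f_inv_f f_f_inv by (metis bij_betw_byWitness subset_UNIV)
  show "f_inv (f x) = x" "f (f_inv y) = y" for x y by (rule f_inv_f, rule f_f_inv)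
  show "(f has_derivative blinfun_apply (f' x)) (at x)" for x by (rule deriv)
  show "continuous_on UNIV f'" by (rule continuous_deriv)
  show "continuous_on UNIV (\<lambda>y. inv_isom (f' (f_inv y)))"
    by (intro continuous_on_inv_isom continuous_on_compose2[OF continuous_deriv continuous_on_f_inv] isom) auto
  show "(f_inv has_derivative blinfun_apply (inv_isom (f' (f_inv y)))) (at y)" for y
  proof (rule has_derivative_inverse_basic[OF deriv _ _ _ open_UNIV])
    show "blinfun_apply (inv_isom (f' (f_inv y))) \<circ> blinfun_apply (f' (f_inv y)) = id"
      using isom by auto
    show "continuous (at y) f_inv" using continuous_on_f_inv by (simp add: continuous_on_eq_continuous_at)
  qed (auto simp: f_f_inv blinfun.bounded_linear_right)
qed

end

theorem theorem3p1:
  fixes f :: "'a::banach \<Rightarrow> 'b::banach"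
    and f' :: "'a \<Rightarrow> ('a \<Rightarrow>\<^sub>L 'b)"
    and k :: "'a \<Rightarrow> real"
  assumes deriv: "\<And>x. (f has_derivative blinfun_apply (f' x)) (at x)"
    and cont_deriv: "continuous_on UNIV f'"
    and isom: "\<And>x. is_isom (f' x)"
    and inv_bdd: "\<And>r. 0 < r \<Longrightarrow> bdd_above ((\<lambda>x. norm (inv_isom (f' x))) ` cball 0 r)"
    and k_nonneg: "\<And>x. k x \<ge> 0"
    and k_lip: "locally_lipschitz k"
    and k_coercive: "coercive k"
    and k_dir: "\<And>x v. \<exists>D. has_right_dir_deriv k x v D"
    and k_sup: "bdd_above {right_dir_deriv k x (inv_isom (f' x) u) | x u. norm u = 1}"
  shows "global_diffeo f
    \<and> (\<forall>(h :: 'a \<Rightarrow> real) h'. (\<forall>x. (h has_derivative blinfun_apply (h' x)) (at x))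
          \<and> continuous_on UNIV h' \<longrightarrow>
        (bdd_above {right_dir_deriv h x (inv_isom (f' x) u) | x u. norm u = 1}
         \<longleftrightarrow> bdd_above (range (\<lambda>x. norm (h' x o\<^sub>L inv_isom (f' x))))))"
proof -
  obtain M where "M \<ge> 0" and M: "\<And>x d. right_dir_deriv k x (inv_isom (f' x) d) \<le> M * norm d"
    using right_dir_deriv_linear_bound[OF k_dir k_sup] by blast
  interpret coercive_lyapunov f f' k M
    using deriv cont_deriv isom inv_bdd k_lip k_coercive k_dir \<open>M \<ge> 0\<close> M by unfold_locales
  show ?thesis by (simp add: global_diffeo bdd_above_right_dir_deriv_iff)
qed

end
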